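(* Let $X$ be a connected, locally path connected space and $H\le\pi_1(X,x_0)$. Suppose $X$ is homotopically Hausdorff relative to $H$ and $H$ is a dense subset of $\pi_1^{wh}(X,x_0)$. Then $p_H:\tilde X_H\to X$ has the unique path lifting property: for every path $\alpha$ in $X$ starting at $x_0$, any path $\beta:I\to\tilde X_H$ with $\beta(0)=e_H$ and $p_H\circ\beta=\alpha$ equals the standard lift $t\mapsto\langle\alpha_t\rangle_H$, where $\alpha_t(s)=\alpha(ts)$.
   Context: $\tilde X_H$ is the set of classes $\langle\alpha\rangle_H$ of paths starting at $x_0$ under $\alpha_1\sim_H\alpha_2$ iff $\alpha_1(1)=\alpha_2(1)$ and $[\alpha_1*\alpha_2^{-1}]\in H$, $e_H$ is the class of the constant path, and $p_H(\langle\alpha\rangle_H)=\alpha(1)$; $\tilde X_H$ has the whisker topology with basis $(U,\langle\alpha\rangle_H)=\{\langle\alpha*\gamma\rangle_H:\gamma$ a path in $U$, $\gamma(0)=\alpha(1)\}$, $U$ an open neighborhood of $\alpha(1)$. $\pi_1^{wh}(X,x_0)$ is $\pi_1(X,x_0)$ with the whisker topology, having basis the sets $[\alpha]\,i_*\pi_1(U,x_0)$, $U$ an open neighborhood of $x_0$. $X$ is homotopically Hausdorff relative to $H$ if for every $g\in\pi_1(X,x_0)\setminus H$ and every path $\alpha$ from $x_0$ there is an open neighborhood $U$ of $\alpha(1)$ such that no loop $\gamma:(I,\partial I)\to(U,\alpha(1))$ satisfies $[\alpha*\gamma*\alpha^{-1}]\in Hg$. *)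

theory Defs
  imports "HOL-Analysis.Analysis"
begin

text \<open>The space X is a subset S of a topological-space type, with the subspace topology.\<close>

definition paths_from :: "'a::topological_space set \<Rightarrow> 'a \<Rightarrow> (real \<Rightarrow> 'a) set" where
  "paths_from S x0 = {p. path p \<and> path_image p \<subseteq> S \<and> pathstart p = x0}"

definition loops :: "'a::topological_space set \<Rightarrow> 'a \<Rightarrow> (real \<Rightarrow> 'a) set" where
  "loops S x0 = {p. path p \<and> path_image p \<subseteq> S \<and> pathstart p = x0 \<and> pathfinish p = x0}"

definition pclass :: "'a::topological_space set \<Rightarrow> (real \<Rightarrow> 'a) \<Rightarrow> (real \<Rightarrow> 'a) set" where
  "pclass S p = {q. homotopic_paths S p q}"

definition pi1 :: "'a::topological_space set \<Rightarrow> 'a \<Rightarrow> (real \<Rightarrow> 'a) set set" where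
  "pi1 S x0 = pclass S ` loops S x0"

definition pi1_subgroup :: "'a::topological_space set \<Rightarrow> 'a \<Rightarrow> (real \<Rightarrow> 'a) set set \<Rightarrow> bool" where
  "pi1_subgroup S x0 H \<longleftrightarrow>
     H \<subseteq> pi1 S x0 \<and>
     pclass S (\<lambda>_. x0) \<in> H \<and>
     (\<forall>p\<in>loops S x0. \<forall>q\<in>loops S x0. pclass S p \<in> H \<longrightarrow> pclass S q \<in> H \<longrightarrow> pclass S (p +++ q) \<in> H) \<and>
     (\<forall>p\<in>loops S x0. pclass S p \<in> H \<longrightarrow> pclass S (reversepath p) \<in> H)"

definition rcoset_pi1 :: "'a::topological_space set \<Rightarrow> 'a \<Rightarrow> (real \<Rightarrow> 'a) set set \<Rightarrow> (real \<Rightarrow> 'a) \<Rightarrow> (real \<Rightarrow> 'a) set set" where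
  "rcoset_pi1 S x0 H g = {pclass S (k +++ g) | k. k \<in> loops S x0 \<and> pclass S k \<in> H}"

definition pi1_wh :: "'a::topological_space set \<Rightarrow> 'a \<Rightarrow> (real \<Rightarrow> 'a) set topology" where
  "pi1_wh S x0 = topology_generated_by
     {{pclass S (\<alpha> +++ \<gamma>) | \<gamma>. \<gamma> \<in> loops U x0} | \<alpha> U.
        \<alpha> \<in> loops S x0 \<and> openin (top_of_set S) U \<and> x0 \<in> U}"

definition homotopically_hausdorff_rel :: "'a::topological_space set \<Rightarrow> 'a \<Rightarrow> (real \<Rightarrow> 'a) set set \<Rightarrow> bool" where
  "homotopically_hausdorff_rel S x0 H \<longleftrightarrow>
     (\<forall>g\<in>loops S x0. pclass S g \<notin> H \<longrightarrow>
        (\<forall>\<alpha>\<in>paths_from S x0. \<exists>U. openin (top_of_set S) U \<and> pathfinish \<alpha> \<in> U \<and>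
           \<not> (\<exists>\<gamma>\<in>loops U (pathfinish \<alpha>).
                 pclass S (\<alpha> +++ \<gamma> +++ reversepath \<alpha>) \<in> rcoset_pi1 S x0 H g)))"

definition hclass :: "'a::topological_space set \<Rightarrow> 'a \<Rightarrow> (real \<Rightarrow> 'a) set set \<Rightarrow> (real \<Rightarrow> 'a) \<Rightarrow> (real \<Rightarrow> 'a) set" where
  "hclass S x0 H \<alpha> = {\<beta> \<in> paths_from S x0. pathfinish \<beta> = pathfinish \<alpha> \<and>
                                          pclass S (\<alpha> +++ reversepath \<beta>) \<in> H}"

definition XH :: "'a::topological_space set \<Rightarrow> 'a \<Rightarrow> (real \<Rightarrow> 'a) set set \<Rightarrow> (real \<Rightarrow> 'a) set set" where
  "XH S x0 H = hclass S x0 H ` paths_from S x0"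

definition eH :: "'a::topological_space set \<Rightarrow> 'a \<Rightarrow> (real \<Rightarrow> 'a) set set \<Rightarrow> (real \<Rightarrow> 'a) set" where
  "eH S x0 H = hclass S x0 H (\<lambda>_. x0)"

text \<open>Endpoint projection p_H(<alpha>_H) = alpha(1) (well defined on classes).\<close>
definition pH :: "(real \<Rightarrow> 'a::topological_space) set \<Rightarrow> 'a" where
  "pH A = pathfinish (SOME \<alpha>. \<alpha> \<in> A)"

definition XH_wh :: "'a::topological_space set \<Rightarrow> 'a \<Rightarrow> (real \<Rightarrow> 'a) set set \<Rightarrow> (real \<Rightarrow> 'a) set topology" where
  "XH_wh S x0 H = topology_generated_by
     {{hclass S x0 H (\<alpha> +++ \<gamma>) | \<gamma>. path \<gamma> \<and> path_image \<gamma> \<subseteq> U \<and> pathstart \<gamma> = pathfinish \<alpha>} | \<alpha> U.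
        \<alpha> \<in> paths_from S x0 \<and> openin (top_of_set S) U \<and> pathfinish \<alpha> \<in> U}"

end

theory Submission
  imports Defs
begin

text \<open>The two hypotheses on H already force H to be all of pi_1(X,x0): for a loop g, the
  basic whisker neighbourhood [g^-1] i_* pi_1(U,x0) meets the dense set H in some [g^-1 * gamma],
  and then [g^-1 * gamma * g] lies in the coset Hg, which homotopical Hausdorffness (applied to
  the whisker alpha = g^-1) excludes unless g is in H. With H the whole group, <alpha>_H consists
  of all paths from x0 ending where alpha ends, so a point of X~_H is determined by its projection
  and every lift of alpha is the standard one, pointwise.\<close>

lemma pclass_eqI: "homotopic_paths S p q \<Longrightarrow> pclass S p = pclass S q"
  unfolding pclass_def by (auto intro: homotopic_paths_trans homotopic_paths_sym)

lemma openin_pi1_wh_basis: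
  assumes "\<alpha> \<in> loops S x0" and "openin (top_of_set S) U" and "x0 \<in> U"
  shows "openin (pi1_wh S x0) {pclass S (\<alpha> +++ \<gamma>) | \<gamma>. \<gamma> \<in> loops U x0}"
  unfolding pi1_wh_def by (rule topology_generated_by_Basis) (use assms in blast)

lemma dense_meets_pi1_wh_basis:
  assumes dense: "pi1_wh S x0 closure_of H = topspace (pi1_wh S x0)"
    and "\<alpha> \<in> loops S x0" and "openin (top_of_set S) U" and "x0 \<in> U"
  obtains \<gamma> where "\<gamma> \<in> loops U x0" and "pclass S (\<alpha> +++ \<gamma>) \<in> H"
proof -
  let ?B = "{pclass S (\<alpha> +++ \<gamma>) | \<gamma>. \<gamma> \<in> loops U x0}"
  have open_B: "openin (pi1_wh S x0) ?B"
    using openin_pi1_wh_basis assms(2-4) .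
  have "(\<lambda>_. x0) \<in> loops U x0"
    using \<open>x0 \<in> U\<close> by (auto simp: loops_def path_def path_image_def pathstart_def pathfinish_def)
  then have in_B: "pclass S (\<alpha> +++ (\<lambda>_. x0)) \<in> ?B"
    by blast
  then have "pclass S (\<alpha> +++ (\<lambda>_. x0)) \<in> pi1_wh S x0 closure_of H"
    using openin_subset[OF open_B] dense by blast
  then have "\<exists>y. y \<in> H \<and> y \<in> ?B"
    using open_B in_B by (meson in_closure_of)
  then obtain \<gamma> where "\<gamma> \<in> loops U x0" and "pclass S (\<alpha> +++ \<gamma>) \<in> H"
    by auto
  then show thesis
    by (rule that)
qed

lemma homotopically_hausdorff_rel_dense_contains_loops:
  assumes hh: "homotopically_hausdorff_rel S x0 H"
    and dense: "pi1_wh S x0 closure_of H = topspace (pi1_wh S x0)"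
    and g: "g \<in> loops S x0"
  shows "pclass S g \<in> H"
proof (rule ccontr)
  assume "pclass S g \<notin> H"
  have g_path: "path g" "path_image g \<subseteq> S" "pathstart g = x0" "pathfinish g = x0"
    using g by (auto simp: loops_def)
  define a where "a = reversepath g"
  have a_loop: "a \<in> loops S x0" and a_from: "a \<in> paths_from S x0"
    using g_path by (auto simp: a_def loops_def paths_from_def)
  have "pathfinish a = x0"
    using g_path by (simp add: a_def)
  with hh \<open>pclass S g \<notin> H\<close> g a_from obtain U where U: "openin (top_of_set S) U" "x0 \<in> U"
    and no_loop: "\<not> (\<exists>\<gamma>\<in>loops U x0. pclass S (a +++ \<gamma> +++ reversepath a) \<in> rcoset_pi1 S x0 H g)"
    unfolding homotopically_hausdorff_rel_def by metis
  obtain \<gamma> where \<gamma>: "\<gamma> \<in> loops U x0" and in_H: "pclass S (a +++ \<gamma>) \<in> H"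
    using dense_meets_pi1_wh_basis[OF dense a_loop U] .
  have \<gamma>_path: "path \<gamma>" "path_image \<gamma> \<subseteq> S" "pathstart \<gamma> = x0" "pathfinish \<gamma> = x0"
    using \<gamma> openin_imp_subset[OF U(1)] by (auto simp: loops_def)
  have "a +++ \<gamma> \<in> loops S x0"
    using a_loop \<gamma>_path path_image_join_subset[of a \<gamma>] by (auto simp: loops_def)
  then have "pclass S ((a +++ \<gamma>) +++ g) \<in> rcoset_pi1 S x0 H g"
    unfolding rcoset_pi1_def using in_H by blast
  moreover have "pclass S (a +++ \<gamma> +++ reversepath a) = pclass S ((a +++ \<gamma>) +++ g)"
    unfolding a_def reversepath_reversepath
    by (rule pclass_eqI, rule homotopic_paths_assoc) (use g_path \<gamma>_path in auto)
  ultimately show False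
    using no_loop \<gamma> by metis
qed

lemma hclass_eq_paths_with_same_end:
  assumes all: "\<And>g. g \<in> loops S x0 \<Longrightarrow> pclass S g \<in> H"
    and d: "d \<in> paths_from S x0"
  shows "hclass S x0 H d = {b \<in> paths_from S x0. pathfinish b = pathfinish d}"
proof -
  have "pclass S (d +++ reversepath b) \<in> H"
    if "b \<in> paths_from S x0" "pathfinish b = pathfinish d" for b
    using that d path_image_join_subset[of d "reversepath b"]
    by (intro all) (auto simp: loops_def paths_from_def)
  then show ?thesis
    unfolding hclass_def by auto
qed

lemma pH_hclass:
  assumes all: "\<And>g. g \<in> loops S x0 \<Longrightarrow> pclass S g \<in> H"
    and d: "d \<in> paths_from S x0"
  shows "pH (hclass S x0 H d) = pathfinish d"
proof -
  have "d \<in> hclass S x0 H d"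
    using hclass_eq_paths_with_same_end[OF all d] d by auto
  then have "(SOME b. b \<in> hclass S x0 H d) \<in> hclass S x0 H d"
    by (metis someI)
  then show ?thesis
    unfolding pH_def using hclass_eq_paths_with_same_end[OF all d] by auto
qed

lemma hclass_determined_by_pH:
  assumes all: "\<And>g. g \<in> loops S x0 \<Longrightarrow> pclass S g \<in> H"
    and d: "d \<in> paths_from S x0" and e: "e \<in> paths_from S x0"
    and "pH (hclass S x0 H d) = pathfinish e"
  shows "hclass S x0 H d = hclass S x0 H e"
proof -
  have "pathfinish d = pathfinish e"
    using assms(4) pH_hclass[OF all d] by simp
  then show ?thesis
    by (simp only: hclass_eq_paths_with_same_end[OF all d] hclass_eq_paths_with_same_end[OF all e])
qed

lemma topspace_XH_wh_subset: "topspace (XH_wh S x0 H) \<subseteq> XH S x0 H"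
proof
  fix A
  assume "A \<in> topspace (XH_wh S x0 H)"
  then obtain a U \<gamma> where a: "a \<in> paths_from S x0" and U: "openin (top_of_set S) U"
    and \<gamma>: "path \<gamma>" "path_image \<gamma> \<subseteq> U" "pathstart \<gamma> = pathfinish a"
    and A: "A = hclass S x0 H (a +++ \<gamma>)"
    unfolding XH_wh_def topology_generated_by_topspace by blast
  have "a +++ \<gamma> \<in> paths_from S x0"
    using a \<gamma> openin_imp_subset[OF U] path_image_join_subset[of a \<gamma>]
    by (auto simp: paths_from_def)
  then show "A \<in> XH S x0 H"
    unfolding A XH_def by blast
qed

lemma initial_subpath_in_paths_from:
  assumes "\<alpha> \<in> paths_from S x0" and t: "t \<in> {0..1::real}"
  shows "(\<lambda>s. \<alpha> (t * s)) \<in> paths_from S x0"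
proof -
  have \<alpha>: "path \<alpha>" "path_image \<alpha> \<subseteq> S" "pathstart \<alpha> = x0"
    using assms(1) by (auto simp: paths_from_def)
  have scale_into: "(\<lambda>s. t * s) ` {0..1} \<subseteq> {0..1}"
    using t by (auto simp: mult_le_one)
  have "path (\<lambda>s. \<alpha> (t * s))"
    unfolding path_def
    by (rule continuous_on_compose[of _ "\<lambda>s. t * s" \<alpha>, unfolded o_def])
       (auto intro!: continuous_intros continuous_on_subset[OF \<alpha>(1)[unfolded path_def] scale_into])
  moreover have "path_image (\<lambda>s. \<alpha> (t * s)) \<subseteq> S"
    using \<alpha>(2) scale_into unfolding path_image_def by auto
  ultimately show ?thesis
    using \<alpha>(3) by (auto simp: paths_from_def pathstart_def)
qed

theorem theorem3p6:
  fixes S :: "'a::topological_space set" and x0 :: 'a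
    and H :: "(real \<Rightarrow> 'a) set set"
  assumes "connected S" and "locally path_connected S" and "x0 \<in> S"
    and "pi1_subgroup S x0 H"
    and "homotopically_hausdorff_rel S x0 H"
    and "pi1_wh S x0 closure_of H = topspace (pi1_wh S x0)"
  shows "\<forall>\<alpha>\<in>paths_from S x0. \<forall>\<beta>.
           pathin (XH_wh S x0 H) \<beta> \<and> \<beta> 0 = eH S x0 H \<and> (\<forall>t\<in>{0..1}. pH (\<beta> t) = \<alpha> t)
           \<longrightarrow> (\<forall>t\<in>{0..1}. \<beta> t = hclass S x0 H (\<lambda>s. \<alpha> (t * s)))"
proof (intro ballI allI impI)
  fix \<alpha> \<beta> t
  assume \<alpha>: "\<alpha> \<in> paths_from S x0"
    and \<beta>: "pathin (XH_wh S x0 H) \<beta> \<and> \<beta> 0 = eH S x0 H \<and> (\<forall>t\<in>{0..1}. pH (\<beta> t) = \<alpha> t)"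
    and t: "t \<in> {0..1::real}"
  have all: "\<And>g. g \<in> loops S x0 \<Longrightarrow> pclass S g \<in> H"
    using homotopically_hausdorff_rel_dense_contains_loops assms(5,6) by blast
  have "\<beta> t \<in> topspace (XH_wh S x0 H)"
    using \<beta> t unfolding pathin_def continuous_map_def by auto
  then obtain d where d: "d \<in> paths_from S x0" and \<beta>_t: "\<beta> t = hclass S x0 H d"
    using topspace_XH_wh_subset unfolding XH_def by blast
  have "pH (hclass S x0 H d) = pathfinish (\<lambda>s. \<alpha> (t * s))"
    using \<beta> t unfolding \<beta>_t[symmetric] by (simp add: pathfinish_def)
  then show "\<beta> t = hclass S x0 H (\<lambda>s. \<alpha> (t * s))"
    unfolding \<beta>_t using hclass_determined_by_pH[OF all d initial_subpath_in_paths_from[OF \<alpha> t]]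
    by blast
qed

end
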